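(* Let $\mathcal{F}$ be a compact (in the uniform norm) family of uniformly bounded real-valued Lipschitz functions on $[0,1]$ such that $\int_0^{1/2} f < \int_{1/2}^1 f$ for every $f \in \mathcal{F}$. Then there exist $M, \epsilon > 0$ such that for all integers $m > M$, all integers $m_* \in ((\frac{1}{2}-\epsilon)m, (\frac{1}{2}+\epsilon)m)$, and all $f \in \mathcal{F}$, $$\sum_{j=1}^{m_*} \frac{1}{\log^2(j+3)}f\left(\frac{j}{m}\right) < \sum_{j=m_*+1}^m \frac{1}{\log^2(j+3)}f\left(\frac{j}{m}\right).$$
   Context: $\log$ denotes the natural logarithm. *)

theory Defs
  imports "HOL-Analysis.Analysis"
begin

text \<open>A family of real functions, considered on [0,1], is compact in the uniform norm
  (sup norm over [0,1]); stated as sequential compactness, which is equivalent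
  for (pseudo)metric spaces: every sequence in the family has a subsequence
  converging uniformly on [0,1] to a member of the family.\<close>
definition uniformly_compact_on01 :: "(real \<Rightarrow> real) set \<Rightarrow> bool" where
  "uniformly_compact_on01 F \<longleftrightarrow>
     (\<forall>g::nat \<Rightarrow> real \<Rightarrow> real. (\<forall>n. g n \<in> F) \<longrightarrow>
        (\<exists>r h. strict_mono r \<and> h \<in> F \<and> uniform_limit {0..1} (\<lambda>n. g (r n)) h sequentially))"

end

theory Submission
  imports Defs "HOL-Real_Asymp.Real_Asymp"
begin

text \<open>Let s be the split point and multiply the difference of the two weighted sums by
  ln (m + 3)^2 / m. The rescaled weights ln (m + 3)^2 / ln (j + 3)^2 are at least 1 for j \<le> m,
  and their mean tends to 1 because the weights 1 / ln (j + 3)^2, j \<le> m, add up to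
  (1 + o(1)) m / ln m ^ 2. Hence, for functions bounded by B, the rescaled difference is within
  B o(1) of the unweighted Riemann sum for the integral of f over [s/m, 1] minus that over
  [0, s/m], and this tends to the positive gap between the integrals over [1/2, 1] and [0, 1/2]
  as s/m tends to 1/2. Uniformity over the family comes from compactness: a sequence of
  counterexamples has a subsequence converging uniformly to some h in the family, and the
  Riemann sums of its members are compared with those of the Lipschitz function h.\<close>

lemma lipschitz_on_integrable:
  fixes f :: "real \<Rightarrow> real"
  assumes "C-lipschitz_on S f" and "{a..b} \<subseteq> S"
  shows "f integrable_on {a..b}"
  by (meson assms integrable_continuous_interval lipschitz_on_continuous_on lipschitz_on_subset)

lemma lipschitz_integral_right_endpoint_error:
  fixes h :: "real \<Rightarrow> real"
  assumes L: "C-lipschitz_on {a..c} h" and ac: "a \<le> c"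
  shows "\<bar>h c * (c - a) - integral {a..c} h\<bar> \<le> C * (c - a)^2"
proof -
  have close: "h c - C * (c - a) \<le> h x \<and> h x \<le> h c + C * (c - a)" if "x \<in> {a..c}" for x
  proof -
    have "dist (h c) (h x) \<le> C * dist c x"
      by (rule lipschitz_onD[OF L]) (use ac that in auto)
    also have "\<dots> \<le> C * (c - a)"
      using that lipschitz_on_nonneg[OF L] by (auto simp: dist_real_def intro!: mult_left_mono)
    finally show ?thesis by (auto simp: dist_real_def abs_le_iff)
  qed
  have int: "h integrable_on {a..c}" using lipschitz_on_integrable[OF L] by simp
  have "integral {a..c} (\<lambda>x. h c - C * (c - a)) \<le> integral {a..c} h"
    and "integral {a..c} h \<le> integral {a..c} (\<lambda>x. h c + C * (c - a))"
    by (intro integral_le; use int close in auto)+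
  then show ?thesis
    using ac by (simp add: abs_le_iff power2_eq_square algebra_simps)
qed

lemma lipschitz_riemann_sum_error:
  fixes h :: "real \<Rightarrow> real" and m a b :: nat
  assumes L: "C-lipschitz_on {0..1} h" and "a \<le> b" and "b \<le> m"
  shows "\<bar>(\<Sum>j=a+1..b. h (real j / real m)) / real m - integral {real a / real m..real b / real m} h\<bar>
           \<le> real (b - a) * C / real m ^ 2"
  using assms(2,3)
proof (induction b rule: dec_induct)
  case base
  then show ?case by simp
next
  case (step n)
  define x where "x k = real k / real m" for k
  have m: "0 < real m" using step by simp
  have x_mono: "x a \<le> x n" "x n \<le> x (Suc n)" and x_le_1: "x (Suc n) \<le> 1"
    using step m by (auto simp: x_def divide_right_mono)
  have x_nonneg: "0 \<le> x k" for k by (simp add: x_def)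
  have step_width: "x (Suc n) - x n = 1 / real m"
    using m by (simp add: x_def field_simps)
  have "integral {x a..x (Suc n)} h = integral {x a..x n} h + integral {x n..x (Suc n)} h"
    by (rule Henstock_Kurzweil_Integration.integral_combine[symmetric, OF x_mono])
       (rule lipschitz_on_integrable[OF L], use x_mono x_le_1 x_nonneg in auto)
  moreover have "(\<Sum>j=a+1..Suc n. h (x j)) = (\<Sum>j=a+1..n. h (x j)) + h (x (Suc n))"
    using \<open>a \<le> n\<close> by (simp add: sum.cl_ivl_Suc)
  moreover have "\<bar>h (x (Suc n)) * (x (Suc n) - x n) - integral {x n..x (Suc n)} h\<bar>
                   \<le> C * (x (Suc n) - x n)^2"
    by (rule lipschitz_integral_right_endpoint_error[OF lipschitz_on_subset[OF L]])
       (use x_mono x_le_1 x_nonneg in auto)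
  moreover have "real (Suc n - a) * C / real m ^ 2 = real (n - a) * C / real m ^ 2 + C * (1 / real m)^2"
    using step by (simp add: of_nat_diff field_simps)
  moreover have "\<bar>(\<Sum>j=a+1..n. h (x j)) / real m - integral {x a..x n} h\<bar> \<le> real (n - a) * C / real m ^ 2"
    using step unfolding x_def by simp
  ultimately show ?case
    unfolding x_def[symmetric] step_width by (simp add: add_divide_distrib)
qed

definition split_sum_diff :: "(nat \<Rightarrow> real) \<Rightarrow> nat \<Rightarrow> nat \<Rightarrow> real" where
  "split_sum_diff a s m = (\<Sum>j=s+1..m. a j) - (\<Sum>j=1..s. a j)"

lemma split_sum_diff_diff:
  "split_sum_diff (\<lambda>j. a j - b j) s m = split_sum_diff a s m - split_sum_diff b s m"
  by (simp add: split_sum_diff_def sum_subtractf)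

lemma split_sum_diff_mult:
  "split_sum_diff (\<lambda>j. c * a j) s m = c * split_sum_diff a s m"
  by (simp add: split_sum_diff_def sum_distrib_left right_diff_distrib)

lemma abs_split_sum_diff_le:
  assumes "s \<le> m"
  shows "\<bar>split_sum_diff a s m\<bar> \<le> (\<Sum>j=1..m. \<bar>a j\<bar>)"
proof -
  have "(\<Sum>j=1..m. \<bar>a j\<bar>) = (\<Sum>j=1..s. \<bar>a j\<bar>) + (\<Sum>j=s+1..m. \<bar>a j\<bar>)"
    using sum.ub_add_nat[of 1 s "\<lambda>j. \<bar>a j\<bar>" "m - s"] assms by simp
  then show ?thesis
    using sum_abs[of a "{1..s}"] sum_abs[of a "{s+1..m}"] unfolding split_sum_diff_def by linarith
qed

definition integral_gap :: "(real \<Rightarrow> real) \<Rightarrow> real \<Rightarrow> real" where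
  "integral_gap h u = integral {u..1} h - integral {0..u} h"

lemma continuous_on_integral_gap:
  "h integrable_on {0..1} \<Longrightarrow> continuous_on {0..1} (integral_gap h)"
  unfolding integral_gap_def
  by (intro continuous_intros indefinite_integral_continuous_1 indefinite_integral_continuous_1')

lemma split_sum_diff_riemann:
  fixes h :: "real \<Rightarrow> real" and m s :: nat
  assumes L: "C-lipschitz_on {0..1} h" and m: "0 < m" and "s \<le> m"
  shows "\<bar>split_sum_diff (\<lambda>j. h (real j / real m)) s m / real m - integral_gap h (real s / real m)\<bar>
           \<le> C / real m"
proof -
  have right: "\<bar>(\<Sum>j=s+1..m. h (real j / real m)) / real m - integral {real s / real m..1} h\<bar>
                 \<le> real (m - s) * C / real m ^ 2"
    using lipschitz_riemann_sum_error[OF L \<open>s \<le> m\<close> order_refl] m by simp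
  have left: "\<bar>(\<Sum>j=1..s. h (real j / real m)) / real m - integral {0..real s / real m} h\<bar>
                \<le> real s * C / real m ^ 2"
    using lipschitz_riemann_sum_error[OF L _ \<open>s \<le> m\<close>, of 0] by simp
  have "real (m - s) * C / real m ^ 2 + real s * C / real m ^ 2 = C / real m"
    using m \<open>s \<le> m\<close> by (simp add: of_nat_diff field_simps power2_eq_square)
  then show ?thesis
    using right left unfolding split_sum_diff_def integral_gap_def by (simp add: diff_divide_distrib)
qed

lemma one_le_ln_add_3:
  fixes x :: real
  assumes "0 \<le> x"
  shows "1 \<le> ln (x + 3)"
  using assms exp_le by (subst ln_ge_iff) auto

lemma sum_ln_weight_le:
  fixes t :: real
  assumes t: "0 \<le> t"
  shows "(\<Sum>j=1..m. 1 / ln (real j + 3)^2) \<le> t + real m / ln (t + 3)^2"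
proof -
  have pointwise: "1 / ln (real j + 3)^2 \<le> (if real j \<le> t then 1 else 0) + 1 / ln (t + 3)^2" for j
  proof (cases "real j \<le> t")
    case True
    have "1 \<le> ln (real j + 3)^2"
      using one_le_ln_add_3[of "real j"] by (simp add: one_le_power)
    then show ?thesis using True by (simp add: add_increasing2)
  next
    case False
    then have "ln (t + 3)^2 \<le> ln (real j + 3)^2"
      using t one_le_ln_add_3[OF t] by (intro power_mono) auto
    then show ?thesis
      using False one_le_ln_add_3[OF t] by (simp add: frac_le)
  qed
  have "{j\<in>{1..m}. real j \<le> t} \<subseteq> {1..nat \<lfloor>t\<rfloor>}"
    by (auto simp: le_nat_iff le_floor_iff)
  then have "real (card {j\<in>{1..m}. real j \<le> t}) \<le> real (nat \<lfloor>t\<rfloor>)"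
    by (metis card_atLeastAtMost card_mono diff_Suc_1 finite_atLeastAtMost of_nat_mono)
  also have "\<dots> \<le> t" using t by simp
  finally have count: "real (card {j\<in>{1..m}. real j \<le> t}) \<le> t" .
  have "(\<Sum>j=1..m. 1 / ln (real j + 3)^2) \<le> (\<Sum>j=1..m. (if real j \<le> t then 1 else 0) + 1 / ln (t + 3)^2)"
    by (rule sum_mono) (rule pointwise)
  also have "\<dots> = real (card {j\<in>{1..m}. real j \<le> t}) + real m / ln (t + 3)^2"
    by (simp add: sum.distrib sum.If_cases Int_def conj_commute)
  finally show ?thesis using count by linarith
qed

lemma ln_weight_sum_ratio_tendsto:
  "(\<lambda>m. ln (real m + 3)^2 / real m * (\<Sum>j=1..m. 1 / ln (real j + 3)^2)) \<longlonglongrightarrow> 1"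
proof (rule tendsto_sandwich[OF _ _ tendsto_const])
  have "1 \<le> ln (real m + 3)^2 / real m * (\<Sum>j=1..m. 1 / ln (real j + 3)^2)" if "1 \<le> m" for m
  proof -
    have "1 / ln (real m + 3)^2 \<le> 1 / ln (real j + 3)^2" if "j \<in> {1..m}" for j
      using that one_le_ln_add_3[of "real j"] by (auto intro!: frac_le power_mono)
    then have "real m * (1 / ln (real m + 3)^2) \<le> (\<Sum>j=1..m. 1 / ln (real j + 3)^2)"
      using sum_mono[of "{1..m}" "\<lambda>_. 1 / ln (real m + 3)^2"] by simp
    then show ?thesis
      using that one_le_ln_add_3[of "real m"] by (simp add: field_simps)
  qed
  then show "eventually (\<lambda>m. 1 \<le> ln (real m + 3)^2 / real m * (\<Sum>j=1..m. 1 / ln (real j + 3)^2)) sequentially"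
    by (rule eventually_sequentiallyI)
next
  define Q where "Q x = ln (x + 3)^2 / x * (x / ln x ^ 3 + x / ln (x / ln x ^ 3 + 3)^2)" for x :: real
  \<comment> \<open>splitting the weight sum at the index t = m / ln m ^ 3\<close>
  have "ln (real m + 3)^2 / real m * (\<Sum>j=1..m. 1 / ln (real j + 3)^2) \<le> Q (real m)" if "1 \<le> m" for m
    unfolding Q_def
    by (intro mult_left_mono sum_ln_weight_le) (use that in auto)
  then show "eventually (\<lambda>m. ln (real m + 3)^2 / real m * (\<Sum>j=1..m. 1 / ln (real j + 3)^2)
                              \<le> Q (real m)) sequentially"
    by (rule eventually_sequentiallyI)
  have "(Q \<longlongrightarrow> 1) at_top"
    unfolding Q_def by real_asymp
  then show "(\<lambda>m. Q (real m)) \<longlonglongrightarrow> 1"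
    using filterlim_compose filterlim_real_sequentially by blast
qed

lemma weighted_split_sum_approx:
  fixes g h :: "real \<Rightarrow> real" and m s :: nat
  assumes m: "0 < m" and "s \<le> m"
    and g_bound: "\<forall>x\<in>{0..1}. \<bar>g x\<bar> \<le> B"
    and g_close: "\<forall>x\<in>{0..1}. \<bar>g x - h x\<bar> \<le> \<eta>"
  shows "\<bar>ln (real m + 3)^2 / real m * split_sum_diff (\<lambda>j. g (real j / real m) / ln (real j + 3)^2) s m
            - split_sum_diff (\<lambda>j. h (real j / real m)) s m / real m\<bar>
         \<le> B * (ln (real m + 3)^2 / real m * (\<Sum>j=1..m. 1 / ln (real j + 3)^2) - 1) + \<eta>"
proof -
  define L where "L = ln (real m + 3)^2"
  define v where "v j = L * (1 / ln (real j + 3)^2)" for j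
  define a where "a j = L * (g (real j / real m) / ln (real j + 3)^2) - h (real j / real m)" for j
  have a_bound: "\<bar>a j\<bar> \<le> B * (v j - 1) + \<eta>" if j: "j \<in> {1..m}" for j
  proof -
    have x: "real j / real m \<in> {0..1}" using j by auto
    have "1 \<le> v j"
      using j one_le_ln_add_3[of "real j"] unfolding v_def L_def by (auto intro!: power_mono)
    moreover have "a j = (v j - 1) * g (real j / real m) + (g (real j / real m) - h (real j / real m))"
      unfolding a_def v_def by (simp add: algebra_simps)
    ultimately have "\<bar>a j\<bar> \<le> (v j - 1) * \<bar>g (real j / real m)\<bar> + \<bar>g (real j / real m) - h (real j / real m)\<bar>"
      by (simp add: abs_mult abs_triangle_ineq[THEN order_trans])
    also have "\<dots> \<le> (v j - 1) * B + \<eta>"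
      using g_bound g_close x \<open>1 \<le> v j\<close> by (intro add_mono mult_left_mono) auto
    finally show ?thesis by (simp add: mult.commute)
  qed
  have "\<bar>split_sum_diff a s m\<bar> \<le> (\<Sum>j=1..m. B * (v j - 1) + \<eta>)"
    using abs_split_sum_diff_le[OF \<open>s \<le> m\<close>, of a] sum_mono[of "{1..m}" "\<lambda>j. \<bar>a j\<bar>", OF a_bound]
    by linarith
  also have "\<dots> = B * ((\<Sum>j=1..m. v j) - real m) + real m * \<eta>"
    by (simp add: sum.distrib sum_subtractf sum_distrib_left[symmetric] algebra_simps)
  also have "(\<Sum>j=1..m. v j) = real m * (L / real m * (\<Sum>j=1..m. 1 / ln (real j + 3)^2))"
    using m by (simp add: v_def sum_distrib_left)
  also have "B * (\<dots> - real m) + real m * \<eta>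
      = real m * (B * (L / real m * (\<Sum>j=1..m. 1 / ln (real j + 3)^2) - 1) + \<eta>)"
    by (simp add: algebra_simps)
  finally have "\<bar>split_sum_diff a s m\<bar> / real m
                  \<le> B * (L / real m * (\<Sum>j=1..m. 1 / ln (real j + 3)^2) - 1) + \<eta>"
    using m by (simp add: divide_le_eq mult.commute)
  moreover have "\<bar>L / real m * split_sum_diff (\<lambda>j. g (real j / real m) / ln (real j + 3)^2) s m
      - split_sum_diff (\<lambda>j. h (real j / real m)) s m / real m\<bar> = \<bar>split_sum_diff a s m\<bar> / real m"
    unfolding a_def split_sum_diff_diff split_sum_diff_mult by (simp add: diff_divide_distrib[symmetric] abs_divide)
  ultimately show ?thesis
    unfolding L_def[symmetric] by linarith
qed

lemma split_sum_diff_eventually_pos: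
  fixes g :: "nat \<Rightarrow> real \<Rightarrow> real" and h :: "real \<Rightarrow> real" and m s :: "nat \<Rightarrow> nat"
  assumes lim: "uniform_limit {0..1} g h sequentially"
    and bound: "\<forall>n. \<forall>x\<in>{0..1}. \<bar>g n x\<bar> \<le> B"
    and lip: "C-lipschitz_on {0..1} h"
    and m: "filterlim m at_top sequentially"
    and s_le: "\<forall>n. s n \<le> m n"
    and ratio: "(\<lambda>n. real (s n) / real (m n)) \<longlonglongrightarrow> 1/2"
    and gap: "integral {0..1/2} h < integral {1/2..1} h"
  shows "eventually (\<lambda>n. 0 < split_sum_diff (\<lambda>j. g n (real j / real (m n)) / ln (real j + 3)^2) (s n) (m n))
           sequentially"
proof -
  define G where "G = integral_gap h (1/2)"
  have G: "0 < G" using gap by (simp add: G_def integral_gap_def)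
  define W where "W k = ln (real k + 3)^2 / real k * (\<Sum>j=1..k. 1 / ln (real j + 3)^2)" for k
  define lower where
    "lower n = integral_gap h (real (s n) / real (m n)) - B * (W (m n) - 1) - C / real (m n)" for n
  have "(\<lambda>n. integral_gap h (real (s n) / real (m n))) \<longlonglongrightarrow> G"
    unfolding G_def
    by (rule continuous_on_tendsto_compose[OF continuous_on_integral_gap ratio])
       (use lipschitz_on_integrable[OF lip] s_le in \<open>auto intro!: always_eventually simp: divide_le_eq_1\<close>)
  moreover have "(\<lambda>n. W (m n)) \<longlonglongrightarrow> 1"
    unfolding W_def by (rule filterlim_compose[OF ln_weight_sum_ratio_tendsto m])
  moreover have "(\<lambda>n. C / real (m n)) \<longlonglongrightarrow> 0"
    by (intro tendsto_divide_0[OF tendsto_const] filterlim_at_top_imp_at_infinity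
        filterlim_compose[OF filterlim_real_sequentially m])
  ultimately have "lower \<longlonglongrightarrow> G - B * (1 - 1) - 0"
    unfolding lower_def by (intro tendsto_intros)
  then have "eventually (\<lambda>n. G / 2 < lower n) sequentially"
    using G by (intro order_tendstoD) auto
  moreover have "eventually (\<lambda>n. \<forall>x\<in>{0..1}. dist (g n x) (h x) < G / 2) sequentially"
    using uniform_limitD[OF lim, of "G / 2"] G by simp
  moreover have "eventually (\<lambda>n. 1 \<le> m n) sequentially"
    using m by (simp add: filterlim_at_top)
  ultimately show ?thesis
  proof eventually_elim
    case (elim n)
    then have m_pos: "0 < m n" and close: "\<forall>x\<in>{0..1}. \<bar>g n x - h x\<bar> \<le> G / 2"
      by (auto simp: dist_real_def less_imp_le)
    have "0 < ln (real (m n) + 3)^2 / real (m n)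
             * split_sum_diff (\<lambda>j. g n (real j / real (m n)) / ln (real j + 3)^2) (s n) (m n)"
      using weighted_split_sum_approx[OF m_pos s_le[rule_format] bound[THEN spec] close]
        split_sum_diff_riemann[OF lip m_pos s_le[rule_format]] elim
      unfolding lower_def W_def by linarith
    then show ?case
      by (rule zero_less_mult_pos) (use m_pos in simp)
  qed
qed

lemma LIMSEQ_of_abs_diff_less_inverse:
  fixes x :: "nat \<Rightarrow> real"
  assumes "\<And>n. \<bar>x n - a\<bar> < 1 / (real n + 1)"
  shows "x \<longlonglongrightarrow> a"
proof -
  have "(\<lambda>n. 1 / (real n + 1)) \<longlonglongrightarrow> 0" by real_asymp
  then have "(\<lambda>n. x n - a) \<longlonglongrightarrow> 0"
    by (rule Lim_null_comparison[rotated]) (use assms in \<open>auto intro!: always_eventually less_imp_le\<close>)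
  then show ?thesis by (simp add: LIM_zero_iff)
qed

lemma split_sum_diff_pos_near_half:
  fixes F :: "(real \<Rightarrow> real) set"
  assumes compact: "uniformly_compact_on01 F"
    and bounded: "\<exists>B. \<forall>f\<in>F. \<forall>x\<in>{0..1}. \<bar>f x\<bar> \<le> B"
    and lipschitz: "\<forall>f\<in>F. \<exists>C. C-lipschitz_on {0..1} f"
    and ineq: "\<forall>f\<in>F. integral {0..1/2} f < integral {1/2..1} f"
  shows "\<exists>N. \<exists>\<epsilon>>0. \<forall>m s. \<forall>f\<in>F. N < m \<and> s \<le> m \<and> \<bar>real s / real m - 1/2\<bar> < \<epsilon> \<longrightarrow>
           0 < split_sum_diff (\<lambda>j. f (real j / real m) / ln (real j + 3)^2) s m"
proof (rule ccontr)
  assume neg: "\<not> ?thesis"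
  define counterexample where "counterexample n m s f \<longleftrightarrow> f \<in> F \<and> n < m \<and> s \<le> m
      \<and> \<bar>real s / real m - 1/2\<bar> < 1 / (real n + 1)
      \<and> \<not> 0 < split_sum_diff (\<lambda>j. f (real j / real m) / ln (real j + 3)^2) s m"
    for n m s :: nat and f
  have "\<exists>m s f. counterexample n m s f" for n
  proof -
    have "0 < 1 / (real n + 1)" by simp
    then show ?thesis using neg unfolding counterexample_def by blast
  qed
  then obtain m s g where "\<And>n. counterexample n (m n) (s n) (g n)"
    by metis
  note cex = this[unfolded counterexample_def]
  then have "\<forall>n. g n \<in> F" by blast
  then obtain r h where r: "strict_mono r" and "h \<in> F"
    and lim: "uniform_limit {0..1} (\<lambda>n. g (r n)) h sequentially"
    using compact unfolding uniformly_compact_on01_def by blast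
  obtain B where B: "\<forall>n. \<forall>x\<in>{0..1}. \<bar>g (r n) x\<bar> \<le> B"
    using bounded \<open>\<forall>n. g n \<in> F\<close> by blast
  obtain C where C: "C-lipschitz_on {0..1} h"
    using lipschitz \<open>h \<in> F\<close> by blast
  have "filterlim m at_top sequentially"
    using cex by (intro filterlim_at_top_mono[OF filterlim_ident] always_eventually allI) (simp add: less_imp_le)
  then have m_lim: "filterlim (\<lambda>n. m (r n)) at_top sequentially"
    using filterlim_compose filterlim_subseq[OF r] by blast
  have "(\<lambda>n. real (s n) / real (m n)) \<longlonglongrightarrow> 1/2"
    using cex by (intro LIMSEQ_of_abs_diff_less_inverse) blast
  then have ratio_lim: "(\<lambda>n. real (s (r n)) / real (m (r n))) \<longlonglongrightarrow> 1/2"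
    using LIMSEQ_subseq_LIMSEQ[OF _ r] unfolding comp_def by blast
  have "eventually (\<lambda>n. 0 < split_sum_diff (\<lambda>j. g (r n) (real j / real (m (r n))) / ln (real j + 3)^2)
                      (s (r n)) (m (r n))) sequentially"
    by (rule split_sum_diff_eventually_pos[OF lim B C m_lim _ ratio_lim]) (use cex ineq \<open>h \<in> F\<close> in auto)
  then obtain n where "0 < split_sum_diff (\<lambda>j. g (r n) (real j / real (m (r n))) / ln (real j + 3)^2)
                         (s (r n)) (m (r n))"
    unfolding eventually_sequentially by (meson order_refl)
  with cex[of "r n"] show False by blast
qed

lemma sum_int_atLeastAtMost_nat:
  "(\<Sum>j=int a..int b. f j) = (\<Sum>k=a..b. f (int k))"
  by (simp add: image_int_atLeastAtMost[symmetric] sum.reindex)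

lemma int_sums_less_iff_split_sum_diff_pos:
  fixes a :: "int \<Rightarrow> real"
  shows "(\<Sum>j=1..int s. a j) < (\<Sum>j=int s+1..int m. a j) \<longleftrightarrow> 0 < split_sum_diff (\<lambda>j. a (int j)) s m"
  using sum_int_atLeastAtMost_nat[of a 1 s] sum_int_atLeastAtMost_nat[of a "s + 1" m]
  by (simp add: split_sum_diff_def add.commute)

theorem claim13:
  fixes F :: "(real \<Rightarrow> real) set"
  assumes compact: "uniformly_compact_on01 F"
    and bounded: "\<exists>B. \<forall>f\<in>F. \<forall>x\<in>{0..1}. \<bar>f x\<bar> \<le> B"
    and lipschitz: "\<forall>f\<in>F. \<exists>C. C-lipschitz_on {0..1} f"
    and ineq: "\<forall>f\<in>F. integral {0..1/2} f < integral {1/2..1} f"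
  shows "\<exists>M>0. \<exists>\<epsilon>>0. \<forall>m::int. real_of_int m > M \<longrightarrow>
           (\<forall>ms::int. (1/2 - \<epsilon>) * real_of_int m < real_of_int ms
                     \<and> real_of_int ms < (1/2 + \<epsilon>) * real_of_int m \<longrightarrow>
             (\<forall>f\<in>F. (\<Sum>j=1..ms. f (real_of_int j / real_of_int m) / (ln (real_of_int j + 3))^2)
                   < (\<Sum>j=ms+1..m. f (real_of_int j / real_of_int m) / (ln (real_of_int j + 3))^2)))"
proof -
  obtain N \<epsilon> where "\<epsilon> > 0"
    and pos: "\<forall>m s. \<forall>f\<in>F. N < m \<and> s \<le> m \<and> \<bar>real s / real m - 1/2\<bar> < \<epsilon> \<longrightarrow>
      0 < split_sum_diff (\<lambda>j. f (real j / real m) / ln (real j + 3)^2) s m"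
    using split_sum_diff_pos_near_half[OF assms] by blast
  define \<delta> where "\<delta> = min \<epsilon> (1/2)"
  have "0 < \<delta>" "\<delta> \<le> \<epsilon>" "\<delta> \<le> 1/2" using \<open>\<epsilon> > 0\<close> by (auto simp: \<delta>_def)
  show ?thesis
  proof (rule exI[of _ "real N + 1"], intro conjI exI[of _ \<delta>] allI impI ballI)
    fix m ms :: int and f
    assume m: "real N + 1 < m" and ms: "(1/2 - \<delta>) * m < ms \<and> ms < (1/2 + \<delta>) * m" and "f \<in> F"
    have "0 < real_of_int m" using m by linarith
    then have "0 \<le> (1/2 - \<delta>) * m" and "(1/2 + \<delta>) * m \<le> 1 * real_of_int m"
      using \<open>\<delta> \<le> 1/2\<close> by (intro mult_nonneg_nonneg mult_right_mono; simp)+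
    then have "0 \<le> ms" "ms \<le> m"
      using ms by linarith+
    then obtain m' s' :: nat where m': "m = int m'" and s': "ms = int s'"
      by (metis nonneg_int_cases order_trans)
    have "\<bar>real s' / real m' - 1/2\<bar> < \<delta>"
      using ms m unfolding m' s' by (simp add: abs_less_iff field_simps)
    then have "0 < split_sum_diff (\<lambda>j. f (real j / real m') / ln (real j + 3)^2) s' m'"
      using pos \<open>f \<in> F\<close> m \<open>ms \<le> m\<close> \<open>\<delta> \<le> \<epsilon>\<close> unfolding m' s' by simp
    then show "(\<Sum>j=1..ms. f (real_of_int j / real_of_int m) / (ln (real_of_int j + 3))^2)
             < (\<Sum>j=ms+1..m. f (real_of_int j / real_of_int m) / (ln (real_of_int j + 3))^2)"
      unfolding m' s' int_sums_less_iff_split_sum_diff_pos by simp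
  qed (use \<open>0 < \<delta>\<close> in auto)
qed

end
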